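(* Let $\ell\ge2$ and let $G$ be a graph such that every connected component of $\overline{G}$ is a pendant tree. If $c$ is the number of connected components of $\overline{G}$, then $G$ is $N$-AW if and only if $\gcd(2c-1,\ell)=1$.
   Context: All graphs are finite and simple; $\overline{G}$ is the complement. For a graph $H$, $H\odot K_1$ is obtained from $H$ by adding, for each vertex $u$ of $H$, a new vertex adjacent only to $u$; a pendant tree is a tree of this form. Labels lie in $\mathbb{Z}_\ell$. In the neighborhood Lights Out game, toggling a vertex $w$ adds $1$ (mod $\ell$) to the label of each vertex of the closed neighborhood $N[w]$; the game is won when all labels are $0$; a graph is $N$-AW if every initial labeling can be won. *)

theory Defs
  imports Main
begin

definition simple_graph :: "'a set \<Rightarrow> ('a \<Rightarrow> 'a \<Rightarrow> bool) \<Rightarrow> bool" where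
  "simple_graph V E \<longleftrightarrow> finite V \<and> (\<forall>x y. E x y \<longrightarrow> x \<in> V \<and> y \<in> V \<and> x \<noteq> y)
     \<and> (\<forall>x y. E x y \<longrightarrow> E y x)"

definition compl_graph :: "'a set \<Rightarrow> ('a \<Rightarrow> 'a \<Rightarrow> bool) \<Rightarrow> 'a \<Rightarrow> 'a \<Rightarrow> bool" where
  "compl_graph V E x y \<longleftrightarrow> x \<in> V \<and> y \<in> V \<and> x \<noteq> y \<and> \<not> E x y"

definition induced :: "'a set \<Rightarrow> ('a \<Rightarrow> 'a \<Rightarrow> bool) \<Rightarrow> 'a \<Rightarrow> 'a \<Rightarrow> bool" where
  "induced C E x y \<longleftrightarrow> E x y \<and> x \<in> C \<and> y \<in> C"

definition components :: "'a set \<Rightarrow> ('a \<Rightarrow> 'a \<Rightarrow> bool) \<Rightarrow> 'a set set" where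
  "components V E = {{y \<in> V. (induced V E)\<^sup>*\<^sup>* x y} | x. x \<in> V}"

definition connected_graph :: "'a set \<Rightarrow> ('a \<Rightarrow> 'a \<Rightarrow> bool) \<Rightarrow> bool" where
  "connected_graph V E \<longleftrightarrow> V \<noteq> {} \<and> (\<forall>x\<in>V. \<forall>y\<in>V. (induced V E)\<^sup>*\<^sup>* x y)"

definition acyclic_graph :: "'a set \<Rightarrow> ('a \<Rightarrow> 'a \<Rightarrow> bool) \<Rightarrow> bool" where
  "acyclic_graph V E \<longleftrightarrow> \<not> (\<exists>xs. distinct xs \<and> length xs \<ge> 3 \<and> set xs \<subseteq> V
      \<and> (\<forall>i. Suc i < length xs \<longrightarrow> E (xs ! i) (xs ! Suc i)) \<and> E (last xs) (hd xs))"

definition tree_graph :: "'a set \<Rightarrow> ('a \<Rightarrow> 'a \<Rightarrow> bool) \<Rightarrow> bool" where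
  "tree_graph V E \<longleftrightarrow> connected_graph V E \<and> acyclic_graph V E"

text \<open>(V,E) is (isomorphic to) H \<odot> K1 for some graph H: the vertices split into U (the
  vertices of H) and V - U, with a bijection m : U -> V - U such that m u is adjacent
  only to u.  E is assumed to live on V.\<close>
definition corona_K1_form :: "'a set \<Rightarrow> ('a \<Rightarrow> 'a \<Rightarrow> bool) \<Rightarrow> bool" where
  "corona_K1_form V E \<longleftrightarrow> (\<exists>U m. U \<subseteq> V \<and> bij_betw m U (V - U)
      \<and> (\<forall>u\<in>U. \<forall>x. E (m u) x \<longleftrightarrow> x = u))"

definition pendant_tree :: "'a set \<Rightarrow> ('a \<Rightarrow> 'a \<Rightarrow> bool) \<Rightarrow> bool" where
  "pendant_tree V E \<longleftrightarrow> tree_graph V E \<and> corona_K1_form V E"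

text \<open>Neighborhood Lights Out over Z_l: toggling w (t w times) adds t w to every vertex of N[w].
  The graph is N-AW if every initial labeling can be brought to all zeros.\<close>
definition closed_nbhd :: "'a set \<Rightarrow> ('a \<Rightarrow> 'a \<Rightarrow> bool) \<Rightarrow> 'a \<Rightarrow> 'a set" where
  "closed_nbhd V E w = {v \<in> V. v = w \<or> E w v}"

definition N_AW :: "'a set \<Rightarrow> ('a \<Rightarrow> 'a \<Rightarrow> bool) \<Rightarrow> nat \<Rightarrow> bool" where
  "N_AW V E l \<longleftrightarrow> (\<forall>f :: 'a \<Rightarrow> int. \<exists>t :: 'a \<Rightarrow> int. \<forall>v\<in>V.
      (f v + (\<Sum>w\<in>{w \<in> V. v \<in> closed_nbhd V E w}. t w)) mod int l = 0)"

end

theory Submission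
  imports Defs "HOL-Library.Disjoint_Sets"
begin

text \<open>Let \<open>A\<close> be the adjacency matrix of the complement \<open>G\<^sup>c\<close>. Toggling in \<open>G\<close> acts on
  labels by \<open>B = J - A\<close>, with \<open>J\<close> the all-ones matrix, and \<open>G\<close> is \<open>N\<close>-AW iff \<open>B\<close> is onto
  modulo \<open>l\<close>. Gluing the components, \<open>G\<^sup>c = H \<odot> K\<^sub>1\<close>, whose adjacency matrix is unimodular:
  a pendant vertex sees only its base vertex. The vector \<open>a = A\<^sup>-\<^sup>1 1\<close> is \<open>1\<close> on the base
  vertices and \<open>2 - deg u\<close> on the pendant vertex of \<open>u\<close>, so \<open>\<Sum>a = \<Sum>\<^sub>v (2 - deg v) = 2c\<close>
  because \<open>G\<^sup>c\<close> is a forest with \<open>c\<close> trees. Hence \<open>a\<^sup>T B t = (2c - 1) \<Sum>t\<close>: if \<open>B\<close> is onto,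
  solving \<open>B t \<equiv> A e\<^sub>w\<close> shows that \<open>2c - 1\<close> is a unit modulo \<open>l\<close>; conversely, if it is,
  then \<open>t = s a + A\<^sup>-\<^sup>1 f\<close> solves \<open>B t \<equiv> -f\<close> for a suitable scalar \<open>s\<close>.\<close>

definition open_nbhd :: "'a set \<Rightarrow> ('a \<Rightarrow> 'a \<Rightarrow> bool) \<Rightarrow> 'a \<Rightarrow> 'a set" where
  "open_nbhd V R v = {w \<in> V. R v w}"

definition degree :: "'a set \<Rightarrow> ('a \<Rightarrow> 'a \<Rightarrow> bool) \<Rightarrow> 'a \<Rightarrow> nat" where
  "degree V R v = card (open_nbhd V R v)"

lemma simple_graph_induced:
  assumes "simple_graph V R" "C \<subseteq> V"
  shows "simple_graph C (induced C R)"
  using assms finite_subset unfolding simple_graph_def induced_def by blast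

lemma induced_eq_self:
  assumes "simple_graph V R"
  shows "induced V R = R"
  using assms unfolding simple_graph_def induced_def by (intro ext) blast

lemma simple_graph_compl:
  assumes "simple_graph V E"
  shows "simple_graph V (compl_graph V E)"
  using assms unfolding simple_graph_def compl_graph_def by blast

lemma acyclic_graph_induced:
  assumes "acyclic_graph V R" "C \<subseteq> V"
  shows "acyclic_graph C (induced C R)"
  using assms unfolding acyclic_graph_def induced_def by blast

section \<open>Trees\<close>

definition graph_path :: "'a set \<Rightarrow> ('a \<Rightarrow> 'a \<Rightarrow> bool) \<Rightarrow> 'a list \<Rightarrow> bool" where
  "graph_path V R xs \<longleftrightarrow> distinct xs \<and> set xs \<subseteq> V
     \<and> (\<forall>i. Suc i < length xs \<longrightarrow> R (xs ! i) (xs ! Suc i))"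

lemma graph_path_take: "graph_path V R xs \<Longrightarrow> graph_path V R (take n xs)"
  unfolding graph_path_def using set_take_subset by fastforce

lemma acyclic_graphD:
  assumes "acyclic_graph V R" "graph_path V R xs" "3 \<le> length xs"
  shows "\<not> R (last xs) (hd xs)"
  using assms unfolding acyclic_graph_def graph_path_def by blast

lemma longest_graph_path:
  assumes "finite V" "graph_path V R ys"
  obtains xs where "graph_path V R xs" "\<And>zs. graph_path V R zs \<Longrightarrow> length zs \<le> length xs"
proof -
  have "length zs \<le> card V" if "graph_path V R zs" for zs
    using that \<open>finite V\<close> by (metis graph_path_def card_mono distinct_card)
  then have "\<exists>n. (\<exists>xs. graph_path V R xs \<and> length xs = n)
      \<and> (\<forall>k. (\<exists>zs. graph_path V R zs \<and> length zs = k) \<longrightarrow> k \<le> n)"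
    using assms(2)
    by (intro ex_has_greatest_nat[where k="length ys" and b="Suc (card V)"])
      (auto simp: less_Suc_eq_le)
  then show ?thesis
    using that by blast
qed

lemma acyclic_graph_has_leaf:
  assumes G: "simple_graph V R" and acyc: "acyclic_graph V R" and "R a b"
  obtains w p where "\<forall>x. R w x \<longleftrightarrow> x = p"
proof -
  have fin: "finite V" and R_in_V: "\<And>x y. R x y \<Longrightarrow> x \<in> V \<and> y \<in> V \<and> x \<noteq> y"
    and sym: "\<And>x y. R x y \<Longrightarrow> R y x"
    using G unfolding simple_graph_def by blast+
  have "graph_path V R [a, b]"
    using \<open>R a b\<close> R_in_V by (auto simp: graph_path_def nth_Cons split: nat.splits)
  then obtain xs where xs: "graph_path V R xs"
    and longest: "\<And>zs. graph_path V R zs \<Longrightarrow> length zs \<le> length xs"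
    using longest_graph_path[OF fin] by blast
  have "2 \<le> length xs"
    using longest[OF \<open>graph_path V R [a, b]\<close>] by simp
  then obtain w p ys where xs_eq: "xs = w # p # ys"
    by (cases xs; cases "tl xs") auto
  \<comment> \<open>The end \<open>w\<close> of a longest path is a leaf: another neighbour \<open>z\<close> would either extend
    the path or close a cycle with it.\<close>
  have "z = p" if "R w z" for z
  proof (rule ccontr)
    assume "z \<noteq> p"
    show False
    proof (cases "z \<in> set xs")
      case False
      have "graph_path V R (z # xs)"
        using xs False \<open>R w z\<close> R_in_V sym unfolding graph_path_def
        by (auto simp: nth_Cons xs_eq split: nat.splits)
      with longest[of "z # xs"] show False
        by simp
    next
      case True
      then obtain j where j: "j < length xs" "xs ! j = z"
        by (meson in_set_conv_nth)
      have "j \<noteq> 0"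
        using j(2) R_in_V[OF \<open>R w z\<close>] xs_eq by (metis nth_Cons_0)
      moreover have "j \<noteq> 1"
        using j \<open>z \<noteq> p\<close> xs_eq by auto
      ultimately have "3 \<le> length (take (Suc j) xs)"
        using j by auto
      moreover have "last (take (Suc j) xs) = z"
        using j by (simp add: take_Suc_conv_app_nth)
      moreover have "hd (take (Suc j) xs) = w"
        by (simp add: xs_eq)
      ultimately show False
        using acyclic_graphD[OF acyc graph_path_take[OF xs]] sym[OF \<open>R w z\<close>] by metis
    qed
  qed
  moreover have "R w p"
    using xs unfolding graph_path_def xs_eq by fastforce
  ultimately show ?thesis
    using that by blast
qed

text \<open>A walk can only enter the leaf \<open>w\<close> from \<open>p\<close> and must return to \<open>p\<close>, so it can be shortcut.\<close>
lemma rtranclp_remove_leaf: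
  assumes G: "simple_graph V R" and leaf: "\<forall>x. R w x \<longleftrightarrow> x = p"
    and "x \<in> V - {w}" "R\<^sup>*\<^sup>* x y"
  shows "(induced (V - {w}) R)\<^sup>*\<^sup>* x (if y = w then p else y)"
  using \<open>R\<^sup>*\<^sup>* x y\<close>
proof (induction rule: rtranclp_induct)
  case base
  then show ?case
    using \<open>x \<in> V - {w}\<close> by auto
next
  case (step y z)
  have R_in_V: "\<And>x y. R x y \<Longrightarrow> x \<in> V \<and> y \<in> V \<and> x \<noteq> y"
    and sym: "\<And>x y. R x y \<Longrightarrow> R y x"
    using G unfolding simple_graph_def by blast+
  show ?case
  proof (cases "y = w \<or> z = w")
    case True
    then have "y = p \<and> z = w \<or> y = w \<and> z = p"
      using step.hyps(2) leaf sym by metis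
    then show ?thesis
      using step.IH by auto
  next
    case False
    then have "induced (V - {w}) R y z"
      using step.hyps(2) R_in_V unfolding induced_def by blast
    then show ?thesis
      using step.IH False by (simp add: rtranclp.rtrancl_into_rtrancl)
  qed
qed

lemma connected_graph_remove_leaf:
  assumes G: "simple_graph V R" and conn: "connected_graph V R"
    and leaf: "\<forall>x. R w x \<longleftrightarrow> x = p"
  shows "connected_graph (V - {w}) (induced (V - {w}) R)"
proof -
  let ?V' = "V - {w}"
  have "p \<in> ?V'"
    using G leaf unfolding simple_graph_def by auto
  have reach: "R\<^sup>*\<^sup>* x y" if "x \<in> V" "y \<in> V" for x y
    using conn that unfolding connected_graph_def induced_eq_self[OF G] by blast
  have idem: "induced ?V' (induced ?V' R) = induced ?V' R"
    unfolding induced_def by (intro ext) blast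
  show ?thesis
    unfolding connected_graph_def idem
  proof (intro conjI ballI)
    show "?V' \<noteq> {}"
      using \<open>p \<in> ?V'\<close> by blast
    fix x y
    assume "x \<in> ?V'" "y \<in> ?V'"
    then show "(induced ?V' R)\<^sup>*\<^sup>* x y"
      using rtranclp_remove_leaf[OF G leaf \<open>x \<in> ?V'\<close> reach[of x y]] by auto
  qed
qed

text \<open>The leaf contributes \<open>1\<close>, and its neighbour loses one unit of degree.\<close>
lemma degree_sum_remove_leaf:
  assumes G: "simple_graph V R" and leaf: "\<forall>x. R w x \<longleftrightarrow> x = p"
  shows "(\<Sum>v\<in>V. 2 - int (degree V R v))
    = (\<Sum>v\<in>V - {w}. 2 - int (degree (V - {w}) (induced (V - {w}) R) v))"
proof -
  let ?V' = "V - {w}" and ?R' = "induced (V - {w}) R"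
  have fin: "finite V" and R_in_V: "\<And>x y. R x y \<Longrightarrow> x \<in> V \<and> y \<in> V \<and> x \<noteq> y"
    and sym: "\<And>x y. R x y \<Longrightarrow> R y x"
    using G unfolding simple_graph_def by blast+
  have w: "w \<in> V" and p: "p \<in> V" "p \<noteq> w"
    using R_in_V[of w p] leaf by auto
  have deg: "int (degree V R v) = int (degree ?V' ?R' v) + (if v = p then 1 else 0)"
    if "v \<in> ?V'" for v
  proof -
    have "open_nbhd V R v = (if v = p then insert w else id) (open_nbhd ?V' ?R' v)"
      using that leaf sym w unfolding open_nbhd_def induced_def by auto
    moreover have "w \<notin> open_nbhd ?V' ?R' v" and "finite (open_nbhd ?V' ?R' v)"
      using fin unfolding open_nbhd_def by auto
    ultimately show ?thesis
      unfolding degree_def by (cases "v = p") simp_all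
  qed
  have "open_nbhd V R w = {p}"
    using leaf p unfolding open_nbhd_def by auto
  then have "(\<Sum>v\<in>V. 2 - int (degree V R v)) = 1 + (\<Sum>v\<in>?V'. 2 - int (degree V R v))"
    using fin w by (simp add: degree_def sum.remove)
  also have "(\<Sum>v\<in>?V'. 2 - int (degree V R v))
      = (\<Sum>v\<in>?V'. 2 - int (degree ?V' ?R' v)) - (\<Sum>v\<in>?V'. if v = p then 1 else 0)"
    by (auto simp: deg sum_subtractf[symmetric] intro!: sum.cong)
  also have "(\<Sum>v\<in>?V'. if v = p then 1 else 0) = (1 :: int)"
    using fin p by simp
  finally show ?thesis
    by simp
qed

lemma tree_degree_sum:
  assumes "simple_graph V R" "tree_graph V R"
  shows "(\<Sum>v\<in>V. 2 - int (degree V R v)) = 2"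
  using assms
proof (induction "card V" arbitrary: V R rule: less_induct)
  case less
  have conn: "connected_graph V R" and acyc: "acyclic_graph V R"
    using less.prems(2) unfolding tree_graph_def by blast+
  show ?case
  proof (cases "\<exists>a b. R a b")
    case False
    obtain x where "x \<in> V"
      using conn unfolding connected_graph_def by blast
    have "y = x" if "y \<in> V" for y
      using conn \<open>x \<in> V\<close> that False
      unfolding connected_graph_def induced_eq_self[OF less.prems(1)]
      by (metis converse_rtranclpE)
    then have "V = {x}"
      using \<open>x \<in> V\<close> by blast
    then show ?thesis
      using False by (simp add: degree_def open_nbhd_def)
  next
    case True
    then obtain w p where leaf: "\<forall>x. R w x \<longleftrightarrow> x = p"
      using acyclic_graph_has_leaf[OF less.prems(1) acyc] by blast
    have "finite V" "w \<in> V"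
      using less.prems(1) leaf unfolding simple_graph_def by blast+
    then have "card (V - {w}) < card V"
      by (rule card_Diff1_less)
    moreover have "simple_graph (V - {w}) (induced (V - {w}) R)"
      using less.prems(1) by (rule simple_graph_induced) blast
    moreover have "tree_graph (V - {w}) (induced (V - {w}) R)"
      using connected_graph_remove_leaf[OF less.prems(1) conn leaf] acyclic_graph_induced[OF acyc]
      unfolding tree_graph_def by blast
    ultimately show ?thesis
      using less.hyps degree_sum_remove_leaf[OF less.prems(1) leaf] by presburger
  qed
qed

section \<open>Connected components\<close>

lemma components_eq_quotient:
  "components V R = V // {(x, y). x \<in> V \<and> y \<in> V \<and> (induced V R)\<^sup>*\<^sup>* x y}"
  unfolding components_def quotient_def by auto

lemma partition_on_components:
  assumes sym: "\<And>x y. R x y \<Longrightarrow> R y x"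
  shows "partition_on V (components V R)"
proof -
  have "symp (induced V R)"
    using sym unfolding induced_def by (auto intro: sympI)
  then have "equiv V {(x, y). x \<in> V \<and> y \<in> V \<and> (induced V R)\<^sup>*\<^sup>* x y}"
    by (intro equivI)
      (auto simp: refl_on_def sym_def trans_def intro: rtranclp_trans sympD[OF symp_rtranclp])
  then show ?thesis
    unfolding components_eq_quotient by (rule partition_on_quotient)
qed

lemma components_subset: "C \<in> components V R \<Longrightarrow> C \<subseteq> V"
  unfolding components_def by blast

lemma components_closed:
  assumes G: "simple_graph V R" and "C \<in> components V R" "x \<in> C" "R x y"
  shows "y \<in> C"
proof -
  have "y \<in> V"
    using G \<open>R x y\<close> unfolding simple_graph_def by blast
  then show ?thesis
    using assms(2-4) unfolding components_def induced_eq_self[OF G]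
    by (auto intro: rtranclp.rtrancl_into_rtrancl)
qed

lemma open_nbhd_component:
  assumes G: "simple_graph V R" and "C \<in> components V R" "v \<in> C"
  shows "open_nbhd C (induced C R) v = open_nbhd V R v"
  using components_closed[OF assms] components_subset[OF assms(2)] assms(3)
  unfolding open_nbhd_def induced_def by blast

lemma forest_degree_sum:
  assumes G: "simple_graph V R" and trees: "\<forall>C\<in>components V R. tree_graph C (induced C R)"
  shows "(\<Sum>v\<in>V. 2 - int (degree V R v)) = 2 * int (card (components V R))"
proof -
  have "finite V" and sym: "\<And>x y. R x y \<Longrightarrow> R y x"
    using G unfolding simple_graph_def by blast+
  have "(\<Sum>v\<in>V. 2 - int (degree V R v)) = (\<Sum>C\<in>components V R. \<Sum>v\<in>C. 2 - int (degree V R v))"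
    by (rule sum.partition[OF \<open>finite V\<close> partition_on_components[OF sym]])
  also have "\<dots> = (\<Sum>C\<in>components V R. 2)"
  proof (rule sum.cong[OF refl])
    fix C
    assume C: "C \<in> components V R"
    have "(\<Sum>v\<in>C. 2 - int (degree V R v)) = (\<Sum>v\<in>C. 2 - int (degree C (induced C R) v))"
      using open_nbhd_component[OF G C] by (simp add: degree_def)
    also have "\<dots> = 2"
      using tree_degree_sum[OF simple_graph_induced[OF G components_subset[OF C]]] trees C by blast
    finally show "(\<Sum>v\<in>C. 2 - int (degree V R v)) = 2" .
  qed
  finally show ?thesis
    by simp
qed

section \<open>The corona \<open>H \<odot> K\<^sub>1\<close>\<close>

lemma partition_on_glue:
  assumes "partition_on V P"
  obtains g where "\<And>C x. C \<in> P \<Longrightarrow> x \<in> C \<Longrightarrow> g x = f C x"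
proof
  have unique: "C = C'" if "C \<in> P" "C' \<in> P" "x \<in> C" "x \<in> C'" for C C' x
    using assms that unfolding partition_on_def disjoint_def by blast
  show "f (SOME C. C \<in> P \<and> x \<in> C) x = f C x" if "C \<in> P" "x \<in> C" for C x
    using unique that by (metis (mono_tags, lifting) someI_ex)
qed

lemma corona_K1_form_partition:
  assumes part: "partition_on V P"
    and closed: "\<And>C x y. C \<in> P \<Longrightarrow> x \<in> C \<Longrightarrow> R x y \<Longrightarrow> y \<in> C"
    and Uc_sub: "\<And>C. C \<in> P \<Longrightarrow> Uc C \<subseteq> C"
    and Uc_bij: "\<And>C. C \<in> P \<Longrightarrow> bij_betw (mc C) (Uc C) (C - Uc C)"
    and Uc_pendant: "\<And>C u x. C \<in> P \<Longrightarrow> u \<in> Uc C \<Longrightarrow> induced C R (mc C u) x \<longleftrightarrow> x = u"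
  shows "corona_K1_form V R"
proof -
  have unique: "C = C'" if "C \<in> P" "C' \<in> P" "x \<in> C" "x \<in> C'" for C C' x
    using part that unfolding partition_on_def disjoint_def by blast
  have V_eq: "V = \<Union>P"
    using part by (rule partition_onD1)
  obtain m where m: "\<And>C u. C \<in> P \<Longrightarrow> u \<in> C \<Longrightarrow> m u = mc C u"
    using partition_on_glue[OF part] by blast
  define U where "U = (\<Union>C\<in>P. Uc C)"
  have "bij_betw m U (\<Union>C\<in>P. C - Uc C)"
    unfolding U_def
  proof (rule bij_betw_UNION_disjoint)
    show "disjoint_family_on (\<lambda>C. C - Uc C) P"
      unfolding disjoint_family_on_def using unique by blast
    show "bij_betw m (Uc C) (C - Uc C)" if "C \<in> P" for C
      using bij_betw_cong[of "Uc C" m "mc C"] m[OF that] Uc_sub[OF that] Uc_bij[OF that] by blast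
  qed
  moreover have "(\<Union>C\<in>P. C - Uc C) = V - U"
    unfolding V_eq U_def using unique Uc_sub by blast
  moreover have "U \<subseteq> V"
    unfolding V_eq U_def using Uc_sub by blast
  moreover have "R (m u) x \<longleftrightarrow> x = u" if "u \<in> U" for u x
  proof -
    obtain C where C: "C \<in> P" "u \<in> Uc C"
      using \<open>u \<in> U\<close> unfolding U_def by blast
    then have "m u = mc C u" and "mc C u \<in> C"
      using m Uc_sub bij_betwE[OF Uc_bij[OF C(1)]] by blast+
    moreover have "R (mc C u) x \<longleftrightarrow> induced C R (mc C u) x"
      using closed[OF C(1) \<open>mc C u \<in> C\<close>] \<open>mc C u \<in> C\<close> unfolding induced_def by blast
    ultimately show ?thesis
      using Uc_pendant[OF C] by simp
  qed
  ultimately show ?thesis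
    unfolding corona_K1_form_def by (intro exI[of _ U] exI[of _ m]) auto
qed

lemma corona_K1_form_components:
  assumes G: "simple_graph V R"
    and coronas: "\<forall>C\<in>components V R. corona_K1_form C (induced C R)"
  shows "corona_K1_form V R"
proof -
  let ?P = "components V R"
  have "\<exists>Uc. \<forall>C\<in>?P. \<exists>m. Uc C \<subseteq> C \<and> bij_betw m (Uc C) (C - Uc C)
      \<and> (\<forall>u\<in>Uc C. \<forall>x. induced C R (m u) x \<longleftrightarrow> x = u)"
    using coronas unfolding corona_K1_form_def by (rule bchoice)
  then obtain Uc where "\<forall>C\<in>?P. \<exists>m. Uc C \<subseteq> C \<and> bij_betw m (Uc C) (C - Uc C)
      \<and> (\<forall>u\<in>Uc C. \<forall>x. induced C R (m u) x \<longleftrightarrow> x = u)" ..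
  then have "\<exists>mc. \<forall>C\<in>?P. Uc C \<subseteq> C \<and> bij_betw (mc C) (Uc C) (C - Uc C)
      \<and> (\<forall>u\<in>Uc C. \<forall>x. induced C R (mc C u) x \<longleftrightarrow> x = u)"
    by (rule bchoice)
  then obtain mc where Uc: "\<forall>C\<in>?P. Uc C \<subseteq> C \<and> bij_betw (mc C) (Uc C) (C - Uc C)
      \<and> (\<forall>u\<in>Uc C. \<forall>x. induced C R (mc C u) x \<longleftrightarrow> x = u)" ..
  have "partition_on V ?P"
    by (rule partition_on_components) (use G in \<open>simp add: simple_graph_def\<close>)
  then show ?thesis
    by (rule corona_K1_form_partition[OF _ components_closed[OF G], where Uc = Uc and mc = mc])
      (use Uc in blast)+
qed

locale corona =
  fixes V :: "'a set" and R :: "'a \<Rightarrow> 'a \<Rightarrow> bool" and U :: "'a set" and m :: "'a \<Rightarrow> 'a"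
  assumes simple: "simple_graph V R"
    and base_subset: "U \<subseteq> V"
    and bij: "bij_betw m U (V - U)"
    and pendant: "\<And>u x. u \<in> U \<Longrightarrow> R (m u) x \<longleftrightarrow> x = u"
begin

lemma finite_vertices: "finite V"
  using simple unfolding simple_graph_def by blast

lemma edge_sym: "R x y \<Longrightarrow> R y x"
  using simple unfolding simple_graph_def by blast

lemma pendant_vertex: "u \<in> U \<Longrightarrow> m u \<in> V - U"
  using bij bij_betwE by blast

lemma sum_vertices: "(\<Sum>v\<in>V. f v) = (\<Sum>u\<in>U. f u + f (m u))"
proof -
  have inj: "inj_on m U" and V_eq: "V = U \<union> m ` U"
    using bij base_subset unfolding bij_betw_def by blast+
  have "finite U"
    using finite_vertices base_subset by (rule finite_subset[rotated])
  moreover have "U \<inter> m ` U = {}"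
    using bij unfolding bij_betw_def by blast
  ultimately have "(\<Sum>v\<in>V. f v) = (\<Sum>v\<in>U. f v) + (\<Sum>v\<in>m ` U. f v)"
    by (subst V_eq) (simp add: sum.union_disjoint)
  also have "(\<Sum>v\<in>m ` U. f v) = (\<Sum>u\<in>U. f (m u))"
    using inj by (simp add: sum.reindex)
  finally show ?thesis
    by (simp add: sum.distrib)
qed

lemma open_nbhd_pendant: "u \<in> U \<Longrightarrow> open_nbhd V R (m u) = {u}"
  using pendant base_subset unfolding open_nbhd_def by blast

lemma open_nbhd_base:
  assumes "u \<in> U"
  shows "open_nbhd V R u = insert (m u) (open_nbhd V R u \<inter> U)"
proof -
  have "R u (m u)"
    using pendant[OF assms] edge_sym by blast
  moreover have "z = m u" if "R u z" "z \<in> V - U" for z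
  proof -
    obtain u' where "u' \<in> U" "z = m u'"
      using \<open>z \<in> V - U\<close> bij unfolding bij_betw_def by blast
    then show ?thesis
      using pendant[of u' u] edge_sym[OF \<open>R u z\<close>] by simp
  qed
  ultimately show ?thesis
    using pendant_vertex[OF assms] unfolding open_nbhd_def by blast
qed

text \<open>The adjacency matrix of \<open>H \<odot> K\<^sub>1\<close> is unimodular: the pendant vertex \<open>m u\<close> only
  sees \<open>u\<close>, which fixes the value at \<open>u\<close>; the value at \<open>m u\<close> then corrects the sum over
  the neighbourhood of \<open>u\<close>.\<close>
definition adj_inv :: "('a \<Rightarrow> int) \<Rightarrow> 'a \<Rightarrow> int" where
  "adj_inv h v = (if v \<in> U then h (m v)
     else let u = the_inv_into U m v in h u - (\<Sum>w\<in>open_nbhd V R u \<inter> U. h (m w)))"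

lemma adj_inv_base: "u \<in> U \<Longrightarrow> adj_inv h u = h (m u)"
  unfolding adj_inv_def by simp

lemma adj_inv_pendant:
  "u \<in> U \<Longrightarrow> adj_inv h (m u) = h u - (\<Sum>w\<in>open_nbhd V R u \<inter> U. h (m w))"
  using pendant_vertex bij unfolding adj_inv_def bij_betw_def by (simp add: the_inv_into_f_f)

lemma sum_open_nbhd_adj_inv:
  assumes "v \<in> V"
  shows "(\<Sum>w\<in>open_nbhd V R v. adj_inv h w) = h v"
proof (cases "v \<in> U")
  case True
  have "finite (open_nbhd V R v \<inter> U)"
    using finite_vertices unfolding open_nbhd_def by simp
  moreover have "m v \<notin> open_nbhd V R v \<inter> U"
    using pendant_vertex[OF True] by blast
  ultimately show ?thesis
    using True by (subst open_nbhd_base) (simp_all add: adj_inv_base adj_inv_pendant)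
next
  case False
  then obtain u where "u \<in> U" "v = m u"
    using assms bij unfolding bij_betw_def by blast
  then show ?thesis
    by (simp add: open_nbhd_pendant adj_inv_base)
qed

lemma sum_adj_inv_one: "(\<Sum>v\<in>V. adj_inv (\<lambda>_. 1) v) = (\<Sum>v\<in>V. 2 - int (degree V R v))"
proof -
  have "int (degree V R u) = int (card (open_nbhd V R u \<inter> U)) + 1" if "u \<in> U" for u
  proof -
    have "finite (open_nbhd V R u \<inter> U)"
      using finite_vertices unfolding open_nbhd_def by simp
    moreover have "m u \<notin> open_nbhd V R u \<inter> U"
      using pendant_vertex[OF that] by blast
    ultimately show ?thesis
      unfolding degree_def by (subst open_nbhd_base[OF that]) simp
  qed
  then show ?thesis
    unfolding sum_vertices
    by (intro sum.cong) (simp_all add: adj_inv_base adj_inv_pendant degree_def open_nbhd_pendant)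
qed

end

section \<open>Lights Out on the complement\<close>

text \<open>\<open>M v\<close> is the set of vertices whose toggling changes the label of \<open>v\<close>.\<close>
definition all_winnable :: "'a set \<Rightarrow> ('a \<Rightarrow> 'a set) \<Rightarrow> nat \<Rightarrow> bool" where
  "all_winnable V M l \<longleftrightarrow>
     (\<forall>f :: 'a \<Rightarrow> int. \<exists>t :: 'a \<Rightarrow> int. \<forall>v\<in>V. (f v + (\<Sum>w\<in>M v. t w)) mod int l = 0)"

lemma N_AW_eq_all_winnable_compl:
  assumes "simple_graph V E"
  shows "N_AW V E l \<longleftrightarrow> all_winnable V (\<lambda>v. V - open_nbhd V (compl_graph V E) v) l"
proof -
  have sym: "\<And>x y. E x y \<Longrightarrow> E y x"
    using assms unfolding simple_graph_def by blast
  have "{w \<in> V. v \<in> closed_nbhd V E w} = V - open_nbhd V (compl_graph V E) v" if "v \<in> V" for v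
    using that sym unfolding closed_nbhd_def open_nbhd_def compl_graph_def by auto
  then show ?thesis
    unfolding N_AW_def all_winnable_def by simp
qed

lemma sum_weighted_compl_nbhd:
  fixes a t :: "'a \<Rightarrow> int"
  assumes G: "simple_graph V R"
    and weights: "\<And>w. w \<in> V \<Longrightarrow> (\<Sum>v\<in>open_nbhd V R w. a v) = 1"
  shows "(\<Sum>v\<in>V. a v * (\<Sum>w\<in>V - open_nbhd V R v. t w)) = ((\<Sum>v\<in>V. a v) - 1) * (\<Sum>w\<in>V. t w)"
proof -
  have fin: "finite V" and sym: "\<And>x y. R x y \<Longrightarrow> R y x"
    using G unfolding simple_graph_def by blast+
  have "(\<Sum>v\<in>V. \<Sum>w\<in>open_nbhd V R v. a v * t w) = (\<Sum>w\<in>V. \<Sum>v\<in>{v \<in> V. R v w}. a v * t w)"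
    unfolding open_nbhd_def by (rule sum.swap_restrict[OF fin fin])
  also have "\<dots> = (\<Sum>w\<in>V. (\<Sum>v\<in>open_nbhd V R w. a v) * t w)"
  proof (rule sum.cong[OF refl])
    fix w
    have "{v \<in> V. R v w} = open_nbhd V R w"
      using sym unfolding open_nbhd_def by blast
    then show "(\<Sum>v\<in>{v \<in> V. R v w}. a v * t w) = (\<Sum>v\<in>open_nbhd V R w. a v) * t w"
      by (simp add: sum_distrib_right)
  qed
  also have "\<dots> = (\<Sum>w\<in>V. t w)"
    using weights by simp
  finally have swap: "(\<Sum>v\<in>V. a v * (\<Sum>w\<in>open_nbhd V R v. t w)) = (\<Sum>w\<in>V. t w)"
    by (simp add: sum_distrib_left)
  have "(\<Sum>v\<in>V. a v * (\<Sum>w\<in>V - open_nbhd V R v. t w))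
      = (\<Sum>v\<in>V. a v * (\<Sum>w\<in>V. t w) - a v * (\<Sum>w\<in>open_nbhd V R v. t w))"
    using fin by (intro sum.cong) (auto simp: sum_diff open_nbhd_def right_diff_distrib)
  also have "\<dots> = (\<Sum>v\<in>V. a v) * (\<Sum>w\<in>V. t w) - (\<Sum>w\<in>V. t w)"
    by (simp add: sum_subtractf swap sum_distrib_right)
  finally show ?thesis
    by (simp add: left_diff_distrib)
qed

lemma gcd_eq_1_if_all_winnable_compl:
  fixes a :: "'a \<Rightarrow> int"
  assumes G: "simple_graph V R"
    and weights: "\<And>w. w \<in> V \<Longrightarrow> (\<Sum>v\<in>open_nbhd V R w. a v) = 1"
    and winnable: "all_winnable V (\<lambda>v. V - open_nbhd V R v) l"
  shows "gcd ((\<Sum>v\<in>V. a v) - 1) (int l) = 1"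
proof (cases "V = {}")
  case True
  then show ?thesis
    by simp
next
  case False
  let ?k = "\<Sum>v\<in>V. a v"
  have fin: "finite V"
    using G unfolding simple_graph_def by blast
  obtain w0 where "w0 \<in> V"
    using False by blast
  \<comment> \<open>\<open>f = -A e\<^sub>w\<^sub>0\<close>, so \<open>a\<^sup>T f = -(A a) w0 = -1\<close>.\<close>
  define f :: "'a \<Rightarrow> int" where "f v = (if v \<in> open_nbhd V R w0 then -1 else 0)" for v
  obtain t where t: "\<forall>v\<in>V. (f v + (\<Sum>w\<in>V - open_nbhd V R v. t w)) mod int l = 0"
    using winnable[unfolded all_winnable_def, THEN spec[of _ f]] by blast
  have "(\<Sum>v\<in>V. a v * f v) = - (\<Sum>v\<in>V. if v \<in> open_nbhd V R w0 then a v else 0)"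
    unfolding sum_negf[symmetric] f_def by (rule sum.cong) simp_all
  also have "\<dots> = - (\<Sum>v\<in>open_nbhd V R w0. a v)"
    using fin by (simp add: open_nbhd_def sum.inter_filter)
  also have "\<dots> = -1"
    using weights[OF \<open>w0 \<in> V\<close>] by simp
  finally have "(\<Sum>v\<in>V. a v * (f v + (\<Sum>w\<in>V - open_nbhd V R v. t w)))
      = -1 + (?k - 1) * (\<Sum>w\<in>V. t w)"
    using sum_weighted_compl_nbhd[OF G weights, of t] by (simp add: distrib_left sum.distrib)
  moreover have "int l dvd (\<Sum>v\<in>V. a v * (f v + (\<Sum>w\<in>V - open_nbhd V R v. t w)))"
    using t by (intro dvd_sum dvd_mult) (simp add: dvd_eq_mod_eq_0)
  ultimately have "int l dvd (?k - 1) * (\<Sum>w\<in>V. t w) - 1"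
    by simp
  then have "gcd (?k - 1) (int l) dvd (?k - 1) * (\<Sum>w\<in>V. t w) - 1"
    by (rule dvd_trans[OF gcd_dvd2])
  moreover have "gcd (?k - 1) (int l) dvd (?k - 1) * (\<Sum>w\<in>V. t w)"
    by (rule dvd_mult2[OF gcd_dvd1])
  ultimately have "gcd (?k - 1) (int l) dvd (?k - 1) * (\<Sum>w\<in>V. t w) - ((?k - 1) * (\<Sum>w\<in>V. t w) - 1)"
    by (rule dvd_diff[rotated])
  then show ?thesis
    by simp
qed

lemma all_winnable_compl_if_gcd_eq_1:
  fixes a :: "'a \<Rightarrow> int"
  assumes G: "simple_graph V R"
    and solvable: "\<And>h :: 'a \<Rightarrow> int. \<exists>x. \<forall>v\<in>V. (\<Sum>w\<in>open_nbhd V R v. x w) = h v"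
    and weights: "\<And>w. w \<in> V \<Longrightarrow> (\<Sum>v\<in>open_nbhd V R w. a v) = 1"
    and "gcd ((\<Sum>v\<in>V. a v) - 1) (int l) = 1"
  shows "all_winnable V (\<lambda>v. V - open_nbhd V R v) l"
  unfolding all_winnable_def
proof
  fix f :: "'a \<Rightarrow> int"
  let ?k = "\<Sum>v\<in>V. a v"
  have fin: "finite V"
    using G unfolding simple_graph_def by blast
  have "\<exists>p q. p * (?k - 1) + q * int l = 1"
    using bezout_int[of "?k - 1" "int l"] assms(4) by simp
  then obtain p q where bezout: "1 - p * (?k - 1) = q * int l"
    by (metis add_diff_cancel_left')
  obtain x where x: "\<forall>v\<in>V. (\<Sum>w\<in>open_nbhd V R v. x w) = f v"
    using solvable[of f] by blast
  \<comment> \<open>\<open>t = s a + x\<close> has neighbourhood sums \<open>s + f\<close>; \<open>s\<close> is chosen so that the total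
    \<open>s k + \<Sum>x\<close> of \<open>t\<close> is congruent to \<open>s\<close> modulo \<open>l\<close>.\<close>
  define s where "s = - p * (\<Sum>w\<in>V. x w)"
  define t where "t w = s * a w + x w" for w
  have "f v + (\<Sum>w\<in>V - open_nbhd V R v. t w) = q * (\<Sum>w\<in>V. x w) * int l" if "v \<in> V" for v
  proof -
    have "(\<Sum>w\<in>V - open_nbhd V R v. t w) = (\<Sum>w\<in>V. t w) - (\<Sum>w\<in>open_nbhd V R v. t w)"
      using fin by (simp add: sum_diff open_nbhd_def)
    moreover have "(\<Sum>w\<in>V. t w) = s * ?k + (\<Sum>w\<in>V. x w)"
      unfolding t_def by (simp add: sum.distrib sum_distrib_left)
    moreover have "(\<Sum>w\<in>open_nbhd V R v. t w) = s + f v"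
      using weights[OF that] x that unfolding t_def by (simp add: sum.distrib sum_distrib_left[symmetric])
    ultimately have "f v + (\<Sum>w\<in>V - open_nbhd V R v. t w) = s * (?k - 1) + (\<Sum>w\<in>V. x w)"
      by (simp add: algebra_simps)
    also have "\<dots> = (\<Sum>w\<in>V. x w) * (1 - p * (?k - 1))"
      unfolding s_def by (simp add: algebra_simps)
    also have "\<dots> = q * (\<Sum>w\<in>V. x w) * int l"
      unfolding bezout by (simp add: mult_ac)
    finally show ?thesis .
  qed
  then show "\<exists>t. \<forall>v\<in>V. (f v + (\<Sum>w\<in>V - open_nbhd V R v. t w)) mod int l = 0"
    by (intro exI[of _ t]) simp
qed

lemma all_winnable_compl_iff:
  fixes a :: "'a \<Rightarrow> int"
  assumes G: "simple_graph V R"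
    and solvable: "\<And>h :: 'a \<Rightarrow> int. \<exists>x. \<forall>v\<in>V. (\<Sum>w\<in>open_nbhd V R v. x w) = h v"
    and weights: "\<And>w. w \<in> V \<Longrightarrow> (\<Sum>v\<in>open_nbhd V R w. a v) = 1"
  shows "all_winnable V (\<lambda>v. V - open_nbhd V R v) l \<longleftrightarrow> gcd ((\<Sum>v\<in>V. a v) - 1) (int l) = 1"
proof
  show "gcd ((\<Sum>v\<in>V. a v) - 1) (int l) = 1" if "all_winnable V (\<lambda>v. V - open_nbhd V R v) l"
    using G weights that by (rule gcd_eq_1_if_all_winnable_compl)
  show "all_winnable V (\<lambda>v. V - open_nbhd V R v) l" if "gcd ((\<Sum>v\<in>V. a v) - 1) (int l) = 1"
    using G solvable weights that by (rule all_winnable_compl_if_gcd_eq_1)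
qed

theorem corollary3p11:
  fixes V :: "'a set" and E :: "'a \<Rightarrow> 'a \<Rightarrow> bool" and l c :: nat
  assumes "simple_graph V E"
    and "l \<ge> 2"
    and "\<forall>C \<in> components V (compl_graph V E). pendant_tree C (induced C (compl_graph V E))"
    and "c = card (components V (compl_graph V E))"
  shows "N_AW V E l \<longleftrightarrow> gcd (2 * int c - 1) (int l) = 1"
proof -
  let ?R = "compl_graph V E"
  have G: "simple_graph V ?R"
    using assms(1) by (rule simple_graph_compl)
  have degree_sum: "(\<Sum>v\<in>V. 2 - int (degree V ?R v)) = 2 * int c"
    using forest_degree_sum[OF G] assms(3,4) unfolding pendant_tree_def by blast
  have "corona_K1_form V ?R"
    using corona_K1_form_components[OF G] assms(3) unfolding pendant_tree_def by blast
  then obtain U m where "corona V ?R U m"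
    using G unfolding corona_K1_form_def corona_def by blast
  then interpret corona V ?R U m .
  have "N_AW V E l \<longleftrightarrow> all_winnable V (\<lambda>v. V - open_nbhd V ?R v) l"
    using assms(1) by (rule N_AW_eq_all_winnable_compl)
  also have "\<dots> \<longleftrightarrow> gcd ((\<Sum>v\<in>V. adj_inv (\<lambda>_. 1) v) - 1) (int l) = 1"
  proof (rule all_winnable_compl_iff[OF G])
    show "\<exists>x. \<forall>v\<in>V. (\<Sum>w\<in>open_nbhd V ?R v. x w) = h v" for h :: "'a \<Rightarrow> int"
      by (intro exI[of _ "adj_inv h"] ballI sum_open_nbhd_adj_inv)
    show "(\<Sum>v\<in>open_nbhd V ?R w. adj_inv (\<lambda>_. 1) v) = 1" if "w \<in> V" for w
      using that by (rule sum_open_nbhd_adj_inv)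
  qed
  finally show ?thesis
    unfolding sum_adj_inv_one degree_sum .
qed

end
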